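(* Let $m\ge1$, $n\ge1$, fix $t_0\in\mathbb{Z}^m$ and let $\mathcal{Z}=\{t\in\mathbb{Z}^m\mid t\ge t_0\}$. Let $T=(T_1,\dots,T_m)\in\mathbb{N}^m$, $T\ne0$. Let $A_\alpha\colon\mathcal{Z}\to\mathcal{M}_n(\mathbb{C})$, $\alpha\in\{1,\dots,m\}$, satisfy $$A_\alpha(t+1_\beta)A_\beta(t)=A_\beta(t+1_\alpha)A_\alpha(t),\quad \forall t\in\mathcal{Z},\ \forall\alpha,\beta,$$ and suppose $A_\alpha(t)$ is invertible for all $\alpha$ and all $t\in\mathcal{Z}$. Let $\Phi(t)=\chi(t,t_0)$, $t\in\mathcal{Z}$. Assume there exist a function $P\colon\mathcal{Z}\to\mathcal{M}_n(\mathbb{C})$ and constant invertible matrices $B_1,\dots,B_m\in\mathcal{M}_n(\mathbb{C})$ such that $P(t+T_\alpha\cdot1_\alpha)=P(t)$ for all $t\in\mathcal{Z}$ and all $\alpha$, $B_\alpha B_\beta=B_\beta B_\alpha$ for all $\alpha,\beta$, and $\Phi(t)=P(t)B_1^{t^1}\cdots B_m^{t^m}$ for all $t\ge t_0$. Consider the recurrences $$x(t+1_\alpha)=A_\alpha(t)x(t),\quad\forall t\ge t_0,\ \forall\alpha\in\{1,\dots,m\},\qquad (1)$$ $$y(t+1_\alpha)=B_\alpha y(t),\quad\forall t\ge t_0,\ \forall\alpha\in\{1,\dots,m\},\qquad (2)$$ for functions $x,y\colon\mathcal{Z}\to\mathbb{C}^n$. Then (each $P(t)$ being invertible) if $y$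 is a solution of (2), then $x(t):=P(t)y(t)$ is a solution of (1); and conversely, if $x$ is a solution of (1), then $y(t):=P(t)^{-1}x(t)$ is a solution of (2).
   Context: $\mathbb{N}=\{0,1,2,\dots\}$; $1_\alpha\in\mathbb{Z}^m$ has $1$ in position $\alpha$ and $0$ elsewhere; $s\le t$ in $\mathbb{Z}^m$ means $s^\alpha\le t^\alpha$ for all $\alpha$; $t=(t^1,\dots,t^m)$. Under the compatibility relations, for each $s\in\mathcal{Z}$ there is a unique $\chi(\cdot,s)\colon\{t\in\mathcal{Z}\mid t\ge s\}\to\mathcal{M}_n(\mathbb{C})$ with $\chi(s,s)=I_n$ and $\chi(t+1_\alpha,s)=A_\alpha(t)\chi(t,s)$ for all $t\ge s$ and all $\alpha$ (the transition matrix). Negative integer powers of invertible matrices are powers of the inverse. *)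

theory Defs
  imports "HOL-Analysis.Analysis"
begin

definition vle :: "int ^ 'm \<Rightarrow> int ^ 'm \<Rightarrow> bool" where
  "vle s t \<longleftrightarrow> (\<forall>i. s $ i \<le> t $ i)"

definition e1 :: "'m \<Rightarrow> int ^ 'm" where
  "e1 \<alpha> = axis \<alpha> 1"

fun matpow :: "complex ^ 'n ^ 'n \<Rightarrow> nat \<Rightarrow> complex ^ 'n ^ 'n" where
  "matpow B 0 = mat 1"
| "matpow B (Suc k) = B ** matpow B k"

definition matipow :: "complex ^ 'n ^ 'n \<Rightarrow> int \<Rightarrow> complex ^ 'n ^ 'n" where
  "matipow B k = (if 0 \<le> k then matpow B (nat k) else matpow (matrix_inv B) (nat (- k)))"

definition Bpow :: "('m \<Rightarrow> complex ^ 'n ^ 'n) \<Rightarrow> int ^ 'm::{finite,linorder} \<Rightarrow> complex ^ 'n ^ 'n" where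
  "Bpow B t = foldr (\<lambda>\<alpha> M. matipow (B \<alpha>) (t $ \<alpha>) ** M) (sorted_list_of_set (UNIV :: 'm set)) (mat 1)"

(* chi(., s) characterized: chi(s,s) = I and chi(t+1_alpha, s) = A_alpha(t) chi(t,s) for t >= s *)
definition is_transition ::
  "('m \<Rightarrow> int ^ 'm \<Rightarrow> complex ^ 'n ^ 'n) \<Rightarrow> int ^ 'm \<Rightarrow> (int ^ 'm \<Rightarrow> complex ^ 'n ^ 'n) \<Rightarrow> bool" where
  "is_transition A s X \<longleftrightarrow> X s = mat 1 \<and>
     (\<forall>t \<alpha>. vle s t \<longrightarrow> X (t + e1 \<alpha>) = A \<alpha> t ** X t)"

definition is_solution ::
  "int ^ 'm \<Rightarrow> ('m \<Rightarrow> int ^ 'm \<Rightarrow> complex ^ 'n ^ 'n) \<Rightarrow> (int ^ 'm \<Rightarrow> complex ^ 'n) \<Rightarrow> bool" where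
  "is_solution t0 A x \<longleftrightarrow> (\<forall>t \<alpha>. vle t0 t \<longrightarrow> x (t + e1 \<alpha>) = A \<alpha> t *v x t)"

end

theory Submission
  imports Defs
begin

text \<open>Write \<open>B^t\<close> for the ordered product \<open>B_1^{t^1} \<cdots> B_m^{t^m}\<close>. The transition matrix
  \<open>\<Phi>(t)\<close> is a product of invertible \<open>A_\<alpha>(s)\<close>, so \<open>P(t) = \<Phi>(t) (B^t)^{-1}\<close> is invertible.
  Because the \<open>B_\<alpha>\<close> commute, \<open>B^{t+1_\<alpha>} = B_\<alpha> B^t\<close>; comparing \<open>\<Phi>(t+1_\<alpha>) = A_\<alpha>(t) \<Phi>(t)\<close>
  with the Floquet factorisation then yields \<open>P(t+1_\<alpha>) B_\<alpha> = A_\<alpha>(t) P(t)\<close>, so \<open>P\<close> is a gauge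
  transformation between the two systems.\<close>

lemma matrix_mul_matrix_inv:
  fixes M :: "'a::field ^'n^'n"
  assumes "invertible M"
  shows "M ** matrix_inv M = mat 1"
  using someI_ex[of "\<lambda>M'. M ** M' = mat 1 \<and> M' ** M = mat 1"] assms
  by (auto simp: invertible_def matrix_inv_def)

lemma matrix_inv_matrix_mul:
  fixes M :: "'a::field ^'n^'n"
  assumes "invertible M"
  shows "matrix_inv M ** M = mat 1"
  using matrix_mul_matrix_inv[OF assms] matrix_left_right_inverse by blast

lemma invertible_matrix_inv:
  fixes M :: "'a::field ^'n^'n"
  assumes "invertible M"
  shows "invertible (matrix_inv M)"
  using matrix_mul_matrix_inv[OF assms] invertible_left_inverse by blast

lemma matrix_mul_right_cancel:
  fixes C X Y :: "'a::field ^'n^'n"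
  assumes "invertible C" "X ** C = Y ** C"
  shows "X = Y"
proof -
  have "X ** (C ** matrix_inv C) = Y ** (C ** matrix_inv C)"
    using assms(2) by (metis matrix_mul_assoc)
  then show ?thesis by (simp add: matrix_mul_matrix_inv[OF assms(1)] matrix_mul_rid)
qed

lemma invertible_mat_1: "invertible (mat 1 :: 'a::field^'n^'n)"
  unfolding invertible_def by (metis matrix_mul_lid)

lemma commute_matrix_inv:
  fixes C M :: "'a::field ^'n^'n"
  assumes "C ** M = M ** C" "invertible M"
  shows "C ** matrix_inv M = matrix_inv M ** C"
proof -
  have "C ** matrix_inv M = (matrix_inv M ** M) ** C ** matrix_inv M"
    using matrix_inv_matrix_mul[OF assms(2)] by (simp add: matrix_mul_lid)
  also have "\<dots> = matrix_inv M ** C ** (M ** matrix_inv M)"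
    by (metis assms(1) matrix_mul_assoc)
  also have "\<dots> = matrix_inv M ** C"
    using matrix_mul_matrix_inv[OF assms(2)] by (simp add: matrix_mul_rid)
  finally show ?thesis .
qed

lemma commute_matpow:
  assumes "C ** M = M ** C"
  shows "C ** matpow M k = matpow M k ** C"
proof (induction k)
  case (Suc k)
  have "C ** matpow M (Suc k) = (C ** M) ** matpow M k"
    by (simp add: matrix_mul_assoc)
  also have "\<dots> = M ** (C ** matpow M k)"
    by (simp add: assms matrix_mul_assoc)
  also have "\<dots> = matpow M (Suc k) ** C"
    using Suc by (simp add: matrix_mul_assoc)
  finally show ?case .
qed (simp add: matrix_mul_lid matrix_mul_rid)

lemma commute_matipow:
  assumes "C ** M = M ** C" "invertible M"
  shows "C ** matipow M k = matipow M k ** C"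
  using commute_matpow[OF assms(1)] commute_matpow[OF commute_matrix_inv[OF assms]]
  by (simp add: matipow_def)

lemma invertible_matpow:
  assumes "invertible M"
  shows "invertible (matpow M k)"
  by (induction k) (simp_all add: invertible_mat_1 invertible_mult assms)

lemma invertible_matipow:
  assumes "invertible M"
  shows "invertible (matipow M k)"
  by (simp add: matipow_def assms invertible_matpow invertible_matrix_inv)

lemma matipow_add_1:
  assumes "invertible M"
  shows "matipow M (k + 1) = M ** matipow M k"
proof (cases "0 \<le> k")
  case True
  then have "nat (k + 1) = Suc (nat k)" by simp
  with True show ?thesis by (simp add: matipow_def)
next
  case False
  then have "nat (- k) = Suc (nat (- (k + 1)))" by simp
  with False have "M ** matipow M k = (M ** matrix_inv M) ** matpow (matrix_inv M) (nat (- (k + 1)))"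
    by (simp add: matipow_def matrix_mul_assoc)
  also have "\<dots> = matipow M (k + 1)"
    using False by (cases "k + 1 = 0") (simp_all add: matipow_def matrix_mul_lid
        matrix_mul_matrix_inv[OF assms])
  finally show ?thesis by simp
qed

lemma e1_nth: "e1 \<alpha> $ i = (if i = \<alpha> then 1 else 0)"
  by (simp add: e1_def axis_def)

lemma foldr_matipow_add_e1:
  assumes "\<And>\<beta>. invertible (B \<beta>)" "\<And>\<beta> \<gamma>. B \<beta> ** B \<gamma> = B \<gamma> ** B \<beta>"
    and "distinct xs" "\<alpha> \<in> set xs"
  shows "foldr (\<lambda>\<beta> M. matipow (B \<beta>) ((t + e1 \<alpha>) $ \<beta>) ** M) xs (mat 1)
       = B \<alpha> ** foldr (\<lambda>\<beta> M. matipow (B \<beta>) (t $ \<beta>) ** M) xs (mat 1)"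
  using assms(3,4)
proof (induction xs)
  case (Cons \<beta> xs)
  show ?case
  proof (cases "\<beta> = \<alpha>")
    case True
    with Cons.prems have "foldr (\<lambda>\<beta> M. matipow (B \<beta>) ((t + e1 \<alpha>) $ \<beta>) ** M) xs (mat 1)
        = foldr (\<lambda>\<beta> M. matipow (B \<beta>) (t $ \<beta>) ** M) xs (mat 1)"
      by (intro foldr_cong) (auto simp: e1_nth)
    with True show ?thesis by (simp add: e1_nth matipow_add_1 assms(1) matrix_mul_assoc)
  next
    case False
    have "B \<alpha> ** matipow (B \<beta>) (t $ \<beta>) = matipow (B \<beta>) (t $ \<beta>) ** B \<alpha>"
      using commute_matipow assms(1,2) by blast
    with Cons False show ?thesis by (simp add: e1_nth matrix_mul_assoc)
  qed
qed simp

lemma Bpow_add_e1: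
  assumes "\<And>\<beta>. invertible (B \<beta>)" "\<And>\<beta> \<gamma>. B \<beta> ** B \<gamma> = B \<gamma> ** B \<beta>"
  shows "Bpow B (t + e1 \<alpha>) = B \<alpha> ** Bpow B t"
  unfolding Bpow_def by (rule foldr_matipow_add_e1[OF assms]) simp_all

lemma invertible_Bpow:
  assumes "\<And>\<beta>. invertible (B \<beta>)"
  shows "invertible (Bpow B t)"
proof -
  have "invertible (foldr (\<lambda>\<beta> M. matipow (B \<beta>) (t $ \<beta>) ** M) xs (mat 1))" for xs
    by (induction xs) (simp_all add: invertible_mat_1 invertible_mult invertible_matipow assms)
  then show ?thesis unfolding Bpow_def .
qed

lemma vle_add_e1: "vle s t \<Longrightarrow> vle s (t + e1 \<alpha>)"
  unfolding vle_def by (simp add: e1_nth add_increasing2)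

lemma vle_induct[consumes 1, case_names base step]:
  assumes "vle s t"
    and base: "P s"
    and step: "\<And>t \<alpha>. vle s t \<Longrightarrow> P t \<Longrightarrow> P (t + e1 \<alpha>)"
  shows "P t"
proof -
  have "vle s t \<Longrightarrow> (\<Sum>i\<in>UNIV. nat (t $ i - s $ i)) = k \<Longrightarrow> P t" for k t
  proof (induction k arbitrary: t)
    case 0
    then have "t = s" by (auto simp: vle_def vec_eq_iff intro: antisym)
    with base show ?case by simp
  next
    case (Suc k)
    have "\<exists>\<alpha>. s $ \<alpha> < t $ \<alpha>"
    proof (rule ccontr)
      assume "\<nexists>\<alpha>. s $ \<alpha> < t $ \<alpha>"
      then have "(\<Sum>i\<in>UNIV. nat (t $ i - s $ i)) = 0" by (simp add: not_less)
      with Suc.prems(2) show False by simp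
    qed
    then obtain \<alpha> where \<alpha>: "s $ \<alpha> < t $ \<alpha>" ..
    define r where "r = t - e1 \<alpha>"
    have "vle s r" using Suc.prems(1) \<alpha> by (auto simp: vle_def r_def e1_nth)
    moreover have "(\<Sum>i\<in>UNIV. nat (r $ i - s $ i)) = k"
    proof -
      have "(\<Sum>i\<in>UNIV. nat (t $ i - s $ i)) = (\<Sum>i\<in>UNIV. nat (r $ i - s $ i) + (if i = \<alpha> then 1 else 0))"
        using \<alpha> by (intro sum.cong) (auto simp: r_def e1_nth)
      with Suc.prems(2) show ?thesis by (simp add: sum.distrib)
    qed
    ultimately have "P r" by (rule Suc.IH)
    with \<open>vle s r\<close> have "P (r + e1 \<alpha>)" by (rule step)
    then show ?case by (simp add: r_def)
  qed
  with assms(1) show ?thesis by blast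
qed

lemma invertible_transition:
  assumes "is_transition A s X" "\<And>t \<alpha>. vle s t \<Longrightarrow> invertible (A \<alpha> t)" "vle s t"
  shows "invertible (X t)"
  using assms(3)
proof (induction rule: vle_induct)
  case base
  with assms(1) show ?case by (simp add: is_transition_def invertible_mat_1)
next
  case (step t \<alpha>)
  with assms(1,2) show ?case by (simp add: is_transition_def invertible_mult)
qed

lemma floquet_factor_intertwines:
  assumes transition: "is_transition A t0 \<Phi>"
    and B_inv: "\<And>\<alpha>. invertible (B \<alpha>)"
    and B_comm: "\<And>\<alpha> \<beta>. B \<alpha> ** B \<beta> = B \<beta> ** B \<alpha>"
    and floquet: "\<And>t. vle t0 t \<Longrightarrow> \<Phi> t = P t ** Bpow B t"
    and "vle t0 t"
  shows "P (t + e1 \<alpha>) ** B \<alpha> = A \<alpha> t ** P t"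
proof -
  have "(P (t + e1 \<alpha>) ** B \<alpha>) ** Bpow B t = \<Phi> (t + e1 \<alpha>)"
    using floquet[OF vle_add_e1[OF \<open>vle t0 t\<close>]] by (simp add: Bpow_add_e1 B_inv B_comm matrix_mul_assoc)
  also have "\<dots> = (A \<alpha> t ** P t) ** Bpow B t"
    using transition floquet \<open>vle t0 t\<close> by (simp add: is_transition_def matrix_mul_assoc)
  finally show ?thesis
    by (rule matrix_mul_right_cancel[OF invertible_Bpow[of B, OF B_inv]])
qed

lemma is_solution_gauge:
  assumes "\<And>t \<alpha>. vle t0 t \<Longrightarrow> P (t + e1 \<alpha>) ** B \<alpha> t = A \<alpha> t ** P t"
    and "is_solution t0 B y"
  shows "is_solution t0 A (\<lambda>t. P t *v y t)"
  using assms by (simp add: is_solution_def matrix_vector_mul_assoc)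

lemma is_solution_gauge_inv:
  fixes P :: "int ^ 'm \<Rightarrow> complex ^ 'n ^ 'n"
  assumes "\<And>t \<alpha>. vle t0 t \<Longrightarrow> P (t + e1 \<alpha>) ** B \<alpha> t = A \<alpha> t ** P t"
    and "\<And>t. vle t0 t \<Longrightarrow> invertible (P t)"
    and "is_solution t0 A x"
  shows "is_solution t0 B (\<lambda>t. matrix_inv (P t) *v x t)"
  unfolding is_solution_def
proof (intro allI impI)
  fix t \<alpha> assume t: "vle t0 t"
  let ?Q = "\<lambda>t. matrix_inv (P t)"
  have "(B \<alpha> t ** ?Q t) ** P t = B \<alpha> t"
    by (simp add: matrix_mul_assoc[symmetric] matrix_inv_matrix_mul[OF assms(2)[OF t]] matrix_mul_rid)
  also have "\<dots> = ?Q (t + e1 \<alpha>) ** (P (t + e1 \<alpha>) ** B \<alpha> t)"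
    using matrix_inv_matrix_mul[OF assms(2)[OF vle_add_e1[OF t, of \<alpha>]]]
    by (metis matrix_mul_assoc matrix_mul_lid)
  also have "\<dots> = (?Q (t + e1 \<alpha>) ** A \<alpha> t) ** P t"
    using assms(1)[OF t] by (simp add: matrix_mul_assoc)
  finally have "B \<alpha> t ** ?Q t = ?Q (t + e1 \<alpha>) ** A \<alpha> t"
    by (rule matrix_mul_right_cancel[OF assms(2)[OF t]])
  with assms(3) t show "?Q (t + e1 \<alpha>) *v x (t + e1 \<alpha>) = B \<alpha> t *v (?Q t *v x t)"
    by (simp add: is_solution_def matrix_vector_mul_assoc)
qed

theorem theorem2p12:
  fixes t0 :: "int ^ ('m::{finite,linorder})"
    and T :: "nat ^ ('m::{finite,linorder})"
    and A :: "('m::{finite,linorder}) \<Rightarrow> int ^ ('m::{finite,linorder}) \<Rightarrow> complex ^ 'n ^ 'n"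
    and \<Phi> P :: "int ^ ('m::{finite,linorder}) \<Rightarrow> complex ^ 'n ^ 'n"
    and B :: "('m::{finite,linorder}) \<Rightarrow> complex ^ 'n ^ 'n"
  assumes T_nz: "T \<noteq> 0"
    and compat: "\<And>t \<alpha> \<beta>. vle t0 t \<Longrightarrow>
                   A \<alpha> (t + e1 \<beta>) ** A \<beta> t = A \<beta> (t + e1 \<alpha>) ** A \<alpha> t"
    and A_inv: "\<And>t \<alpha>. vle t0 t \<Longrightarrow> invertible (A \<alpha> t)"
    and Phi: "is_transition A t0 \<Phi>"
    and P_per: "\<And>t \<alpha>. vle t0 t \<Longrightarrow> P (t + of_int (int (T $ \<alpha>)) *s e1 \<alpha>) = P t"
    and B_inv: "\<And>\<alpha>. invertible (B \<alpha>)"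
    and B_comm: "\<And>\<alpha> \<beta>. B \<alpha> ** B \<beta> = B \<beta> ** B \<alpha>"
    and Floquet: "\<And>t. vle t0 t \<Longrightarrow> \<Phi> t = P t ** Bpow B t"
  shows "(\<forall>t. vle t0 t \<longrightarrow> invertible (P t))
    \<and> (\<forall>y. is_solution t0 (\<lambda>\<alpha> t. B \<alpha>) y \<longrightarrow> is_solution t0 A (\<lambda>t. P t *v y t))
    \<and> (\<forall>x. is_solution t0 A x \<longrightarrow> is_solution t0 (\<lambda>\<alpha> t. B \<alpha>) (\<lambda>t. matrix_inv (P t) *v x t))"
proof -
  have P_inv: "invertible (P t)" if "vle t0 t" for t
  proof -
    have "P t = \<Phi> t ** matrix_inv (Bpow B t)"
      using Floquet[OF that] matrix_mul_matrix_inv[OF invertible_Bpow[of B, OF B_inv]]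
      by (simp add: matrix_mul_rid flip: matrix_mul_assoc)
    then show ?thesis
      using invertible_transition[OF Phi A_inv that] invertible_Bpow[of B, OF B_inv]
      by (simp add: invertible_mult invertible_matrix_inv)
  qed
  have "P (t + e1 \<alpha>) ** B \<alpha> = A \<alpha> t ** P t" if "vle t0 t" for t \<alpha>
    using floquet_factor_intertwines[OF Phi B_inv B_comm Floquet that] .
  with P_inv show ?thesis
    using is_solution_gauge[of t0 P "\<lambda>\<alpha> t. B \<alpha>" A] is_solution_gauge_inv[of t0 P "\<lambda>\<alpha> t. B \<alpha>" A]
    by blast
qed

end
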